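(* Let $f=\|\cdot\|$ be an arbitrary (not necessarily Euclidean) norm on $\mathbb{R}^n$. Then: (i) for every $v\in\partial f(0)$, $f$ is twice epi-differentiable at $0$ for $v$ and $d^2f(0|v)=\delta_{K(0,v)}$; (ii) for $v\in\partial f(0)$, $f$ is generalized twice differentiable at $0$ for $v$ if and only if $v\in\operatorname{int}\partial f(0)$.
   Context: $\partial f$ is the convex subdifferential. First subderivative: $df(\bar x)(w)=\liminf_{t\downarrow0,w'\to w}\frac{f(\bar x+tw')-f(\bar x)}{t}$; critical cone $K(\bar x,\bar v)=\{w:df(\bar x)(w)=\langle\bar v,w\rangle\}$. $\delta_C$ is the indicator of $C$ ($0$ on $C$, $\infty$ off $C$). Second subderivative $d^2f(\bar x|\bar v)(w)=\liminf_{t\downarrow0,w'\to w}\Delta^2_tf(\bar x|\bar v)(w')$ with $\Delta_t^2f(\bar x|\bar v)(w)=\frac{f(\bar x+tw)-f(\bar x)-t\langle\bar v,w\rangle}{\frac12t^2}$; twice epi-differentiability at $\bar x$ for $\bar v$ means $\Delta_t^2f(\bar x|\bar v)$ epi-converges as $t\downarrow0$. A generalized quadratic form is $\frac12\langle\cdot,A\cdot\rangle+\delta_L$, $A$ symmetric, $L$ a linear subspace; generalized twice differentiability at $\bar x$ for $\bar v\in\partial f(\bar x)$ means twice epi-differentiability with $d^2f(\bar x|\bar v)$ a generalized quadratic form. *)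

theory Defs
  imports "HOL-Analysis.Analysis"
begin

definition is_norm :: "('a::euclidean_space \<Rightarrow> real) \<Rightarrow> bool" where
  "is_norm f \<longleftrightarrow> (\<forall>x. 0 \<le> f x) \<and> (\<forall>x. f x = 0 \<longleftrightarrow> x = 0) \<and>
     (\<forall>c x. f (c *\<^sub>R x) = \<bar>c\<bar> * f x) \<and> (\<forall>x y. f (x + y) \<le> f x + f y)"

definition subdiff :: "('a::euclidean_space \<Rightarrow> real) \<Rightarrow> 'a \<Rightarrow> 'a set" where
  "subdiff f x = {v. \<forall>y. f y \<ge> f x + v \<bullet> (y - x)}"

definition indic :: "'a set \<Rightarrow> 'a \<Rightarrow> ereal" where
  "indic C w = (if w \<in> C then 0 else \<infinity>)"

definition subderiv1 :: "('a::euclidean_space \<Rightarrow> real) \<Rightarrow> 'a \<Rightarrow> 'a \<Rightarrow> ereal" where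
  "subderiv1 f x w = Liminf (at (0, w) within ({0<..} \<times> UNIV))
      (\<lambda>(t, w'). ereal ((f (x + t *\<^sub>R w') - f x) / t))"

definition crit_cone :: "('a::euclidean_space \<Rightarrow> real) \<Rightarrow> 'a \<Rightarrow> 'a \<Rightarrow> 'a set" where
  "crit_cone f x v = {w. subderiv1 f x w = ereal (v \<bullet> w)}"

definition diff_quot2 :: "('a::euclidean_space \<Rightarrow> real) \<Rightarrow> 'a \<Rightarrow> 'a \<Rightarrow> real \<Rightarrow> 'a \<Rightarrow> ereal" where
  "diff_quot2 f x v t w = ereal ((f (x + t *\<^sub>R w) - f x - t * (v \<bullet> w)) / (t\<^sup>2 / 2))"

definition subderiv2 :: "('a::euclidean_space \<Rightarrow> real) \<Rightarrow> 'a \<Rightarrow> 'a \<Rightarrow> 'a \<Rightarrow> ereal" where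
  "subderiv2 f x v w = Liminf (at (0, w) within ({0<..} \<times> UNIV))
      (\<lambda>(t, w'). diff_quot2 f x v t w')"

definition epi_conv :: "(real \<Rightarrow> 'a::euclidean_space \<Rightarrow> ereal) \<Rightarrow> ('a \<Rightarrow> ereal) \<Rightarrow> bool" where
  "epi_conv g G \<longleftrightarrow>
     (\<forall>tk. (\<forall>k. tk k > 0) \<and> tk \<longlonglongrightarrow> 0 \<longrightarrow>
        (\<forall>w. (\<forall>wk. wk \<longlonglongrightarrow> w \<longrightarrow> G w \<le> liminf (\<lambda>k. g (tk k) (wk k))) \<and>
             (\<exists>wk. wk \<longlonglongrightarrow> w \<and> limsup (\<lambda>k. g (tk k) (wk k)) \<le> G w)))"

definition twice_epi_diff :: "('a::euclidean_space \<Rightarrow> real) \<Rightarrow> 'a \<Rightarrow> 'a \<Rightarrow> bool" where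
  "twice_epi_diff f x v \<longleftrightarrow> (\<exists>G. epi_conv (diff_quot2 f x v) G)"

definition gen_quad_form :: "('a::euclidean_space \<Rightarrow> ereal) \<Rightarrow> bool" where
  "gen_quad_form q \<longleftrightarrow> (\<exists>A L. linear A \<and> (\<forall>x y. A x \<bullet> y = x \<bullet> A y) \<and> subspace L \<and>
      q = (\<lambda>w. ereal (1/2 * (w \<bullet> A w)) + indic L w))"

definition gen_twice_diff :: "('a::euclidean_space \<Rightarrow> real) \<Rightarrow> 'a \<Rightarrow> 'a \<Rightarrow> bool" where
  "gen_twice_diff f x v \<longleftrightarrow> v \<in> subdiff f x \<and> twice_epi_diff f x v \<and>
      gen_quad_form (subderiv2 f x v)"

end

theory Submission
  imports Defs
begin

(* By positive homogeneity, the second-order difference quotient of f at 0 for v is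
   2 (f w' - <v, w'>) / t. Its numerator is a continuous nonnegative gap vanishing exactly on
   the critical cone K = {w. f w = <v, w>}, so the quotients stay at 0 on K and blow up off K,
   both along sequences and in the liminf: the epi-limit and the second subderivative are the
   indicator of K. Such an indicator is a generalized quadratic form iff K is a subspace. Since
   w, -w in K forces f w = 0, this happens iff K = {0}, i.e. iff <v, w> < f w on the unit
   sphere; by compactness the gap is then uniform, so a whole ball around v lies in the
   subdifferential. *)

lemma is_norm_zero: "is_norm f \<Longrightarrow> f 0 = 0"
  unfolding is_norm_def by blast

lemma is_norm_eq_0_iff: "is_norm f \<Longrightarrow> f x = 0 \<longleftrightarrow> x = 0"
  unfolding is_norm_def by blast

lemma is_norm_scaleR: "is_norm f \<Longrightarrow> f (c *\<^sub>R x) = \<bar>c\<bar> * f x"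
  unfolding is_norm_def by blast

lemma is_norm_scaleR_nonneg: "is_norm f \<Longrightarrow> 0 \<le> c \<Longrightarrow> f (c *\<^sub>R x) = c * f x"
  by (simp add: is_norm_scaleR)

lemma is_norm_minus: "is_norm f \<Longrightarrow> f (- x) = f x"
  using is_norm_scaleR[of f "-1" x] by simp

lemma is_norm_triangle: "is_norm f \<Longrightarrow> f (x + y) \<le> f x + f y"
  unfolding is_norm_def by blast

lemma is_norm_convex_on:
  assumes f: "is_norm f"
  shows "convex_on UNIV f"
proof (rule convex_onI)
  fix t :: real and x y assume t: "0 < t" "t < 1"
  have "f ((1 - t) *\<^sub>R x + t *\<^sub>R y) \<le> f ((1 - t) *\<^sub>R x) + f (t *\<^sub>R y)"
    using f by (rule is_norm_triangle)
  also have "\<dots> = (1 - t) * f x + t * f y"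
    using f t by (simp add: is_norm_scaleR_nonneg)
  finally show "f ((1 - t) *\<^sub>R x + t *\<^sub>R y) \<le> (1 - t) * f x + t * f y" .
qed simp

lemma is_norm_continuous_on:
  fixes f :: "'a::euclidean_space \<Rightarrow> real"
  shows "is_norm f \<Longrightarrow> continuous_on UNIV f"
  by (rule convex_on_continuous) (simp_all add: is_norm_convex_on)

lemma subdiff_at_zero_iff: "f 0 = 0 \<Longrightarrow> v \<in> subdiff f 0 \<longleftrightarrow> (\<forall>y. v \<bullet> y \<le> f y)"
  unfolding subdiff_def by simp

lemma is_norm_subdiff_le: "is_norm f \<Longrightarrow> v \<in> subdiff f 0 \<Longrightarrow> v \<bullet> y \<le> f y"
  by (simp add: subdiff_at_zero_iff is_norm_zero)

lemma diff_quot2_is_norm: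
  assumes "is_norm f" "0 < t"
  shows "diff_quot2 f 0 v t w = ereal (2 * (f w - v \<bullet> w) / t)"
  using assms by (simp add: diff_quot2_def is_norm_zero is_norm_scaleR_nonneg power2_eq_square
      field_simps)

abbreviation at_right_0_Pair :: "'a::topological_space \<Rightarrow> (real \<times> 'a) filter" where
  "at_right_0_Pair w \<equiv> at (0, w) within ({0<..} \<times> UNIV)"

lemma filterlim_Pair_at_right_0: "filterlim (\<lambda>t. (t, w)) (at_right_0_Pair w) (at_right 0)"
  unfolding filterlim_at
  by (auto intro!: tendsto_eq_intros eventually_at_rightI[of 0 1])

lemma at_right_0_Pair_neq_bot: "at_right_0_Pair w \<noteq> bot"
  using filterlim_Pair_at_right_0[of w] by (auto simp: filterlim_def bot_unique filtermap_bot_iff)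

lemma eventually_at_right_0_Pair_fst_pos: "\<forall>\<^sub>F p in at_right_0_Pair w. 0 < fst p"
  unfolding eventually_at_filter by (auto intro: always_eventually)

lemma tendsto_fst_at_right_0_Pair: "(fst \<longlongrightarrow> 0) (at_right_0_Pair w)"
  using tendsto_fst[OF tendsto_ident_at[of "(0::real, w)"]] by simp

lemma tendsto_snd_at_right_0_Pair: "(snd \<longlongrightarrow> w) (at_right_0_Pair w)"
  using tendsto_snd[OF tendsto_ident_at[of "(0::real, w)"]] by simp

lemma Liminf_le_if_frequently:
  fixes X :: "_ \<Rightarrow> _ :: complete_linorder"
  assumes "\<exists>\<^sub>F x in F. X x \<le> c"
  shows "Liminf F X \<le> c"
proof (rule ccontr)
  assume "\<not> Liminf F X \<le> c"
  then have "\<forall>\<^sub>F x in F. c < X x"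
    using le_Liminf_iff[of "Liminf F X" F X] by auto
  then show False
    using assms by (simp add: frequently_def eventually_mono not_le)
qed

lemma frequently_filterlim:
  assumes "filterlim f G F" "\<exists>\<^sub>F x in F. P (f x)"
  shows "\<exists>\<^sub>F y in G. P y"
  using assms unfolding filterlim_def frequently_def
  by (auto simp: eventually_filtermap dest: filter_leD)

lemma indic_zero_set_le_Liminf_quotient:
  fixes g :: "'a::topological_space \<Rightarrow> real"
  assumes g: "continuous_on UNIV g" "\<And>z. 0 \<le> g z"
    and T: "(T \<longlongrightarrow> 0) F" "\<forall>\<^sub>F x in F. 0 < T x" and W: "(W \<longlongrightarrow> w) F"
  shows "indic {z. g z = 0} w \<le> Liminf F (\<lambda>x. ereal (g (W x) / T x))"
proof (cases "g w = 0")
  case True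
  have "\<forall>\<^sub>F x in F. 0 \<le> ereal (g (W x) / T x)"
    using T(2) by (rule eventually_mono) (simp add: g(2))
  then show ?thesis
    using True by (simp add: indic_def Liminf_bounded)
next
  case False
  then have "0 < g w"
    using g(2)[of w] by simp
  moreover have "((\<lambda>x. g (W x)) \<longlongrightarrow> g w) F"
    using continuous_on_tendsto_compose[OF g(1) W] by simp
  ultimately have "LIM x F. g (W x) * inverse (T x) :> at_top"
    using filterlim_tendsto_pos_mult_at_top filterlim_inverse_at_top[OF T] by blast
  then have "((\<lambda>x. ereal (g (W x) / T x)) \<longlongrightarrow> \<infinity>) F"
    by (simp add: tendsto_PInfty_eq_at_top divide_inverse)
  then have "\<forall>\<^sub>F x in F. ereal B \<le> ereal (g (W x) / T x)" for B
    unfolding tendsto_PInfty by (blast intro: eventually_mono less_imp_le)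
  then have "Liminf F (\<lambda>x. ereal (g (W x) / T x)) = \<infinity>"
    by (intro ereal_top Liminf_bounded)
  then show ?thesis
    by simp
qed

lemma subderiv1_is_norm:
  fixes f :: "'a::euclidean_space \<Rightarrow> real"
  assumes f: "is_norm f"
  shows "subderiv1 f 0 w = ereal (f w)"
  unfolding subderiv1_def
proof (rule lim_imp_Liminf[OF at_right_0_Pair_neq_bot])
  have "((\<lambda>p. ereal (f (snd p))) \<longlongrightarrow> ereal (f w)) (at_right_0_Pair w)"
    by (intro tendsto_ereal continuous_on_tendsto_compose[OF is_norm_continuous_on[OF f]]
        tendsto_snd_at_right_0_Pair) auto
  moreover have "\<forall>\<^sub>F p in at_right_0_Pair w.
      ereal (f (snd p)) = (\<lambda>(t, w'). ereal ((f (0 + t *\<^sub>R w') - f 0) / t)) p"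
    using eventually_at_right_0_Pair_fst_pos
    by (rule eventually_mono) (auto simp: is_norm_zero[OF f] is_norm_scaleR_nonneg[OF f])
  ultimately show "((\<lambda>(t, w'). ereal ((f (0 + t *\<^sub>R w') - f 0) / t)) \<longlongrightarrow> ereal (f w))
      (at_right_0_Pair w)"
    by (rule Lim_transform_eventually)
qed

lemma crit_cone_is_norm: "is_norm f \<Longrightarrow> crit_cone f 0 v = {w. f w = v \<bullet> w}"
  by (simp add: crit_cone_def subderiv1_is_norm)

lemma indic_crit_le_Liminf_diff_quot2:
  fixes f :: "'a::euclidean_space \<Rightarrow> real"
  assumes f: "is_norm f" and v: "v \<in> subdiff f 0"
    and T: "(T \<longlongrightarrow> 0) F" "\<forall>\<^sub>F x in F. 0 < T x" and W: "(W \<longlongrightarrow> w) F"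
  shows "indic {w. f w = v \<bullet> w} w \<le> Liminf F (\<lambda>x. diff_quot2 f 0 v (T x) (W x))"
proof -
  define g where "g z = 2 * (f z - v \<bullet> z)" for z
  have "continuous_on UNIV g"
    unfolding g_def by (intro continuous_intros is_norm_continuous_on[OF f])
  moreover have "0 \<le> g z" for z
    using is_norm_subdiff_le[OF f v] by (simp add: g_def)
  ultimately have "indic {z. g z = 0} w \<le> Liminf F (\<lambda>x. ereal (g (W x) / T x))"
    using T W by (rule indic_zero_set_le_Liminf_quotient)
  moreover have "{z. g z = 0} = {w. f w = v \<bullet> w}"
    by (auto simp: g_def)
  moreover have "\<forall>\<^sub>F x in F. diff_quot2 f 0 v (T x) (W x) = ereal (g (W x) / T x)"
    using T(2) by (rule eventually_mono) (simp add: diff_quot2_is_norm[OF f] g_def)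
  ultimately show ?thesis
    by (simp add: Liminf_eq)
qed

lemma diff_quot2_crit_eq_0:
  "is_norm f \<Longrightarrow> 0 < t \<Longrightarrow> f w = v \<bullet> w \<Longrightarrow> diff_quot2 f 0 v t w = 0"
  by (simp add: diff_quot2_is_norm)

lemma subderiv2_is_norm:
  fixes f :: "'a::euclidean_space \<Rightarrow> real"
  assumes f: "is_norm f" and v: "v \<in> subdiff f 0"
  shows "subderiv2 f 0 v w = indic {w. f w = v \<bullet> w} w"
proof -
  have subderiv2_eq: "subderiv2 f 0 v w =
      Liminf (at_right_0_Pair w) (\<lambda>p. diff_quot2 f 0 v (fst p) (snd p))"
    unfolding subderiv2_def case_prod_unfold ..
  have "indic {w. f w = v \<bullet> w} w \<le> subderiv2 f 0 v w"
    unfolding subderiv2_eq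
    by (rule indic_crit_le_Liminf_diff_quot2[OF f v tendsto_fst_at_right_0_Pair
          eventually_at_right_0_Pair_fst_pos tendsto_snd_at_right_0_Pair])
  moreover have "subderiv2 f 0 v w \<le> 0" if "f w = v \<bullet> w"
  proof -
    have "\<forall>\<^sub>F t in at_right 0. diff_quot2 f 0 v t w \<le> 0"
      using eventually_at_right_less[of 0]
      by (rule eventually_mono) (simp add: diff_quot2_crit_eq_0[OF f _ that])
    then have "\<exists>\<^sub>F p in at_right_0_Pair w. diff_quot2 f 0 v (fst p) (snd p) \<le> 0"
      by (intro frequently_filterlim[OF filterlim_Pair_at_right_0] eventually_frequently) simp_all
    then show ?thesis
      unfolding subderiv2_eq by (rule Liminf_le_if_frequently)
  qed
  ultimately show ?thesis
    by (auto simp: indic_def)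
qed

lemma epi_conv_diff_quot2_is_norm:
  fixes f :: "'a::euclidean_space \<Rightarrow> real"
  assumes f: "is_norm f" and v: "v \<in> subdiff f 0"
  shows "epi_conv (diff_quot2 f 0 v) (indic {w. f w = v \<bullet> w})"
  unfolding epi_conv_def
proof (intro allI impI conjI)
  fix tk :: "nat \<Rightarrow> real" and w :: 'a and wk :: "nat \<Rightarrow> 'a"
  assume tk: "(\<forall>k. 0 < tk k) \<and> tk \<longlonglongrightarrow> 0" and "wk \<longlonglongrightarrow> w"
  then show "indic {w. f w = v \<bullet> w} w \<le> liminf (\<lambda>k. diff_quot2 f 0 v (tk k) (wk k))"
    by (intro indic_crit_le_Liminf_diff_quot2[OF f v]) auto
next
  fix tk :: "nat \<Rightarrow> real" and w :: 'a
  assume tk: "(\<forall>k. 0 < tk k) \<and> tk \<longlonglongrightarrow> 0"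
  have "limsup (\<lambda>k. diff_quot2 f 0 v (tk k) w) \<le> indic {w. f w = v \<bullet> w} w"
    using tk by (cases "f w = v \<bullet> w") (simp_all add: indic_def diff_quot2_crit_eq_0[OF f] Limsup_const)
  then show "\<exists>wk. wk \<longlonglongrightarrow> w \<and> limsup (\<lambda>k. diff_quot2 f 0 v (tk k) (wk k)) \<le> indic {w. f w = v \<bullet> w} w"
    by (intro exI[of _ "\<lambda>k. w"]) simp
qed

lemma gen_quad_form_indic_iff: "gen_quad_form (indic K) \<longleftrightarrow> subspace K"
proof
  assume "gen_quad_form (indic K)"
  then obtain A L where L: "subspace L"
    and eq: "indic K = (\<lambda>w. ereal (1/2 * (w \<bullet> A w)) + indic L w)"
    unfolding gen_quad_form_def by blast
  have "w \<in> K \<longleftrightarrow> w \<in> L" for w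
    using fun_cong[OF eq, of w] by (auto simp: indic_def split: if_splits)
  then have "K = L"
    by blast
  then show "subspace K"
    using L by simp
next
  assume "subspace K"
  moreover have "indic K = (\<lambda>w. ereal (1/2 * (w \<bullet> 0)) + indic K w)"
    by simp
  ultimately show "gen_quad_form (indic K)"
    unfolding gen_quad_form_def by (intro exI[of _ "\<lambda>_. 0"] exI[of _ K]) (simp add: linear_zero)
qed

lemma interior_subdiff_zero_less:
  assumes f0: "f 0 = 0" and v: "v \<in> interior (subdiff f 0)" and w: "w \<noteq> 0"
  shows "v \<bullet> w < f w"
proof -
  obtain e where e: "0 < e" "ball v e \<subseteq> subdiff f 0"
    using v mem_interior by blast
  define u where "u = v + (e / 2 / norm w) *\<^sub>R w"
  have "dist v u < e"
    using e w by (simp add: u_def dist_norm)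
  then have "u \<bullet> w \<le> f w"
    using e f0 by (auto simp: subdiff_at_zero_iff)
  moreover have "u \<bullet> w = v \<bullet> w + e / 2 * norm w"
    using w by (simp add: u_def inner_add_left dot_square_norm power2_eq_square)
  moreover have "0 < e / 2 * norm w"
    using e w by simp
  ultimately show ?thesis
    by linarith
qed

lemma is_norm_uniform_gap:
  fixes f :: "'a::euclidean_space \<Rightarrow> real"
  assumes f: "is_norm f" and less: "\<And>w. w \<noteq> 0 \<Longrightarrow> v \<bullet> w < f w"
  obtains m where "0 < m" "\<And>y. v \<bullet> y + m * norm y \<le> f y"
proof -
  define g where "g w = f w - v \<bullet> w" for w
  have "continuous_on (sphere 0 1) g"
    unfolding g_def
    by (intro continuous_intros continuous_on_subset[OF is_norm_continuous_on[OF f]]) auto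
  then obtain w0 where w0: "w0 \<in> sphere (0::'a) 1" "\<And>y. y \<in> sphere 0 1 \<Longrightarrow> g w0 \<le> g y"
    using continuous_attains_inf[of "sphere (0::'a) 1" g] by auto
  have "w0 \<noteq> 0"
    using w0(1) by auto
  then have "0 < g w0"
    using less by (simp add: g_def)
  moreover have "v \<bullet> y + g w0 * norm y \<le> f y" for y
  proof (cases "y = 0")
    case True
    then show ?thesis
      by (simp add: is_norm_zero[OF f])
  next
    case False
    then have "g w0 \<le> g ((1 / norm y) *\<^sub>R y)"
      by (intro w0(2)) simp
    also have "g ((1 / norm y) *\<^sub>R y) = g y / norm y"
      by (simp add: g_def is_norm_scaleR_nonneg[OF f] diff_divide_distrib)
    finally show ?thesis
      using False by (simp add: g_def pos_le_divide_eq)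
  qed
  ultimately show ?thesis
    by (rule that)
qed

lemma interior_subdiff_is_norm_iff:
  fixes f :: "'a::euclidean_space \<Rightarrow> real"
  assumes f: "is_norm f"
  shows "v \<in> interior (subdiff f 0) \<longleftrightarrow> (\<forall>w. w \<noteq> 0 \<longrightarrow> v \<bullet> w < f w)"
proof (intro iffI allI impI)
  show "v \<bullet> w < f w" if "v \<in> interior (subdiff f 0)" "w \<noteq> 0" for w
    using interior_subdiff_zero_less[of f] is_norm_zero[OF f] that by blast
next
  assume "\<forall>w. w \<noteq> 0 \<longrightarrow> v \<bullet> w < f w"
  then obtain m where m: "0 < m" "\<And>y. v \<bullet> y + m * norm y \<le> f y"
    using is_norm_uniform_gap[OF f] by blast
  have "u \<in> subdiff f 0" if "u \<in> ball v m" for u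
  proof -
    have "u \<bullet> y \<le> f y" for y
    proof -
      have "norm (u - v) \<le> m"
        using that by (simp add: dist_norm norm_minus_commute)
      then have "(u - v) \<bullet> y \<le> m * norm y"
        using norm_cauchy_schwarz[of "u - v" y] mult_right_mono[of "norm (u - v)" m "norm y"]
        by simp
      then show ?thesis
        using m(2)[of y] by (simp add: inner_diff_left)
    qed
    then show ?thesis
      by (simp add: subdiff_at_zero_iff is_norm_zero[OF f])
  qed
  then show "v \<in> interior (subdiff f 0)"
    using m(1) mem_interior by blast
qed

lemma subspace_crit_set_iff:
  fixes f :: "'a::euclidean_space \<Rightarrow> real"
  assumes f: "is_norm f" and v: "v \<in> subdiff f 0"
  shows "subspace {w. f w = v \<bullet> w} \<longleftrightarrow> (\<forall>w. w \<noteq> 0 \<longrightarrow> v \<bullet> w < f w)"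
proof
  assume K: "subspace {w. f w = v \<bullet> w}"
  show "\<forall>w. w \<noteq> 0 \<longrightarrow> v \<bullet> w < f w"
  proof (intro allI impI)
    fix w :: 'a assume "w \<noteq> 0"
    show "v \<bullet> w < f w"
    proof (rule ccontr)
      assume "\<not> v \<bullet> w < f w"
      then have "f w = v \<bullet> w"
        using is_norm_subdiff_le[OF f v, of w] by simp
      moreover have "f (- w) = v \<bullet> (- w)"
        using subspace_neg[OF K, of w] \<open>f w = v \<bullet> w\<close> by simp
      ultimately have "f w = 0"
        using is_norm_minus[OF f, of w] by simp
      then show False
        using \<open>w \<noteq> 0\<close> is_norm_eq_0_iff[OF f] by blast
    qed
  qed
next
  assume "\<forall>w. w \<noteq> 0 \<longrightarrow> v \<bullet> w < f w"
  then have "{w. f w = v \<bullet> w} = {0}"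
    using is_norm_zero[OF f] by (auto simp: order.strict_iff_not)
  then show "subspace {w. f w = v \<bullet> w}"
    by (simp add: subspace_0)
qed

theorem theorem4p3:
  fixes f :: "'a::euclidean_space \<Rightarrow> real"
  assumes "is_norm f"
  shows "(\<forall>v \<in> subdiff f 0. twice_epi_diff f 0 v \<and>
            subderiv2 f 0 v = indic (crit_cone f 0 v))
       \<and> (\<forall>v \<in> subdiff f 0. gen_twice_diff f 0 v \<longleftrightarrow> v \<in> interior (subdiff f 0))"
proof (intro conjI ballI)
  fix v assume v: "v \<in> subdiff f 0"
  have subderiv2: "subderiv2 f 0 v = indic (crit_cone f 0 v)"
    using subderiv2_is_norm[OF assms v] by (simp add: fun_eq_iff crit_cone_is_norm[OF assms])
  then show "subderiv2 f 0 v = indic (crit_cone f 0 v)" .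
  show epi: "twice_epi_diff f 0 v"
    unfolding twice_epi_diff_def using epi_conv_diff_quot2_is_norm[OF assms v] by blast
  show "gen_twice_diff f 0 v \<longleftrightarrow> v \<in> interior (subdiff f 0)"
    unfolding gen_twice_diff_def subderiv2 gen_quad_form_indic_iff crit_cone_is_norm[OF assms]
      subspace_crit_set_iff[OF assms v] interior_subdiff_is_norm_iff[OF assms]
    using v epi by blast
qed

end
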